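(* Let $\Phi:\mathbb{R}^n\to(-\infty,\infty]$ be a proper lower semicontinuous convex function. Then there exists a lower semicontinuous convex function $\tilde\varphi:[0,\infty)\times\mathbb{R}^n\to(-\infty,\infty]$ such that $\tilde\varphi(0,y)=\Phi(y)$ for all $y\in\mathbb{R}^n$, $\tilde\varphi(x,y)\in\mathbb{R}$ for all $x>0$, $y\in\mathbb{R}^n$, for each $y$ the map $x\mapsto\tilde\varphi(x,y)$ is strictly decreasing on $(0,\infty)$, and $\lim_{x\to0+}\tilde\varphi(x,y)=\Phi(y)$ for each $y\in\mathbb{R}^n$.
   Context: A convex function $\Phi:\mathbb{R}^n\to(-\infty,\infty]$ is proper if it is not identically $+\infty$. *)

theory Defs
  imports "HOL-Analysis.Analysis"
begin

definition ereal_convex_on :: "'a::real_vector set \<Rightarrow> ('a \<Rightarrow> ereal) \<Rightarrow> bool" where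
  "ereal_convex_on S f \<longleftrightarrow> convex S \<and> (\<forall>x\<in>S. f x \<noteq> -\<infinity>) \<and>
     (\<forall>x\<in>S. \<forall>y\<in>S. \<forall>t::real. 0 < t \<and> t < 1 \<longrightarrow>
        f ((1 - t) *\<^sub>R x + t *\<^sub>R y) \<le> ereal (1 - t) * f x + ereal t * f y)"

definition ereal_lsc_on :: "'a::metric_space set \<Rightarrow> ('a \<Rightarrow> ereal) \<Rightarrow> bool" where
  "ereal_lsc_on S f \<longleftrightarrow> (\<forall>x\<in>S. \<forall>X. (\<forall>k. X k \<in> S) \<and> X \<longlonglongrightarrow> x \<longrightarrow>
      f x \<le> liminf (\<lambda>k. f (X k)))"

definition ereal_proper :: "('a \<Rightarrow> ereal) \<Rightarrow> bool" where
  "ereal_proper f \<longleftrightarrow> (\<forall>x. f x \<noteq> -\<infinity>) \<and> (\<exists>x. f x \<noteq> \<infinity>)"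

end

theory Submission
  imports Defs
begin

text \<open>Take the Moreau envelope
  \<open>e(x, y) = inf\<^sub>z \<Phi> z + \<parallel>y - z\<parallel>\<^sup>2 / (2x)\<close>, which is jointly convex in \<open>(x, y)\<close> because the
  perspective \<open>(x, w) \<mapsto> \<parallel>w\<parallel>\<^sup>2 / (2x)\<close> is, and set \<open>\<phi>(x, y) = e(x, y) - x\<close>: the envelope is
  nonincreasing in \<open>x\<close>, so subtracting \<open>x\<close> makes \<open>\<phi>\<close> strictly decreasing. A proper lsc convex
  function lies above a cone \<open>a - b \<parallel>z - z\<^sub>0\<parallel>\<close>, which the quadratic penalty dominates; this makes
  \<open>e\<close> finite for \<open>x > 0\<close>, hence continuous there, and together with lower semicontinuity
  of \<open>\<Phi>\<close> gives the lower semicontinuity of \<open>\<phi>\<close> and the limit as \<open>x \<rightarrow> 0\<^sup>+\<close>.\<close>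

lemma ereal_convex_on_subset:
  assumes "ereal_convex_on S f" and "T \<subseteq> S" and "convex T"
  shows "ereal_convex_on T f"
  using assms unfolding ereal_convex_on_def by blast

lemma ereal_convex_on_add:
  assumes "ereal_convex_on S f" and "ereal_convex_on S g"
  shows "ereal_convex_on S (\<lambda>x. f x + g x)"
  unfolding ereal_convex_on_def
proof (intro conjI ballI allI impI)
  show "convex S" using assms(1) unfolding ereal_convex_on_def by blast
  fix x y assume xy: "x \<in> S" "y \<in> S"
  then have fin: "f x \<noteq> -\<infinity>" "f y \<noteq> -\<infinity>" "g x \<noteq> -\<infinity>" "g y \<noteq> -\<infinity>"
    using assms unfolding ereal_convex_on_def by blast+
  then show "f x + g x \<noteq> -\<infinity>" by simp
  fix t :: real assume t: "0 < t \<and> t < 1"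
  let ?p = "(1 - t) *\<^sub>R x + t *\<^sub>R y"
  have "f ?p + g ?p \<le> (ereal (1 - t) * f x + ereal t * f y) + (ereal (1 - t) * g x + ereal t * g y)"
    using assms xy t unfolding ereal_convex_on_def by (intro add_mono) blast+
  also have "\<dots> = ereal (1 - t) * (f x + g x) + ereal t * (f y + g y)"
    using fin by (simp add: ereal_distrib_left ac_simps)
  finally show "f ?p + g ?p \<le> ereal (1 - t) * (f x + g x) + ereal t * (f y + g y)" .
qed

lemma ereal_convex_on_linear_comp:
  assumes "ereal_convex_on T f" and "linear h" and "convex S" and "h ` S \<subseteq> T"
  shows "ereal_convex_on S (\<lambda>x. f (h x))"
  unfolding ereal_convex_on_def
proof (intro conjI ballI allI impI)
  fix x y assume xy: "x \<in> S" "y \<in> S"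
  then have hxy: "h x \<in> T" "h y \<in> T" using assms(4) by blast+
  then show "f (h x) \<noteq> -\<infinity>" using assms(1) unfolding ereal_convex_on_def by blast
  fix t :: real assume "0 < t \<and> t < 1"
  then show "f (h ((1 - t) *\<^sub>R x + t *\<^sub>R y)) \<le> ereal (1 - t) * f (h x) + ereal t * f (h y)"
    using assms(1) hxy unfolding ereal_convex_on_def linear_add[OF assms(2)] linear_scale[OF assms(2)]
    by blast
qed (fact assms(3))

lemma ereal_convex_on_ereal:
  assumes "convex_on S f"
  shows "ereal_convex_on S (\<lambda>x. ereal (f x))"
  using assms unfolding ereal_convex_on_def convex_on_def by auto

lemma ereal_le_lincomb_by_upper_bounds:
  fixes A B C :: ereal
  assumes A: "A \<noteq> -\<infinity>" and B: "B \<noteq> -\<infinity>" and s: "s > 0" and t: "t > 0"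
    and bound: "\<And>\<alpha> \<beta>. A < ereal \<alpha> \<Longrightarrow> B < ereal \<beta> \<Longrightarrow> C \<le> ereal (s * \<alpha> + t * \<beta>)"
  shows "C \<le> ereal s * A + ereal t * B"
proof (cases "A = \<infinity> \<or> B = \<infinity>")
  case True
  then show ?thesis using A B s t by (cases A; cases B) auto
next
  case False
  then obtain a b where a: "A = ereal a" and b: "B = ereal b" using A B
    by (cases A; cases B) auto
  have "C \<le> ereal (s * a + t * b) + ereal e" if e: "e > 0" for e
  proof -
    define h where "h = e / (s + t)"
    have "h > 0" using e s t unfolding h_def by simp
    then have "C \<le> ereal (s * (a + h) + t * (b + h))" using bound a b by simp
    also have "s * (a + h) + t * (b + h) = s * a + t * b + (s + t) * h"
      by (simp add: algebra_simps)
    also have "(s + t) * h = e" using s t unfolding h_def by simp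
    finally show ?thesis by simp
  qed
  then have "C \<le> ereal (s * a + t * b)" by (rule ereal_le_epsilon2)
  then show ?thesis using a b by simp
qed

lemma ereal_convex_on_partial_INF:
  fixes F :: "'a::real_vector \<times> 'b::real_vector \<Rightarrow> ereal"
  assumes F: "ereal_convex_on (S \<times> UNIV) F" and bdd: "\<forall>p\<in>S. (INF z. F (p, z)) \<noteq> -\<infinity>"
  shows "ereal_convex_on S (\<lambda>p. INF z. F (p, z))"
  unfolding ereal_convex_on_def
proof (intro conjI ballI allI impI)
  have "convex (fst ` (S \<times> (UNIV :: 'b set)))"
    using F unfolding ereal_convex_on_def by (intro convex_linear_image) (auto intro: linear_fst)
  then show "convex S" by simp
  fix p1 p2 assume p: "p1 \<in> S" "p2 \<in> S"
  fix t :: real assume t: "0 < t \<and> t < 1"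
  show "(INF z. F ((1 - t) *\<^sub>R p1 + t *\<^sub>R p2, z))
      \<le> ereal (1 - t) * (INF z. F (p1, z)) + ereal t * (INF z. F (p2, z))"
  proof (rule ereal_le_lincomb_by_upper_bounds)
    fix \<alpha> \<beta> assume "(INF z. F (p1, z)) < ereal \<alpha>" and "(INF z. F (p2, z)) < ereal \<beta>"
    then obtain z1 z2 where z1: "F (p1, z1) < ereal \<alpha>" and z2: "F (p2, z2) < ereal \<beta>"
      unfolding INF_less_iff by blast
    have "(INF z. F ((1 - t) *\<^sub>R p1 + t *\<^sub>R p2, z)) \<le> F ((1 - t) *\<^sub>R (p1, z1) + t *\<^sub>R (p2, z2))"
      by (auto intro: INF_lower2)
    also have "\<dots> \<le> ereal (1 - t) * F (p1, z1) + ereal t * F (p2, z2)"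
      using F p t unfolding ereal_convex_on_def by blast
    also have "\<dots> \<le> ereal (1 - t) * ereal \<alpha> + ereal t * ereal \<beta>"
      using z1 z2 t by (intro add_mono ereal_mult_left_mono) auto
    finally show "(INF z. F ((1 - t) *\<^sub>R p1 + t *\<^sub>R p2, z)) \<le> ereal ((1 - t) * \<alpha> + t * \<beta>)"
      by simp
  qed (use bdd p t in auto)
qed (use bdd in auto)

lemma ereal_convex_on_continuous_on:
  fixes f :: "'a::euclidean_space \<Rightarrow> ereal"
  assumes "ereal_convex_on S f" and "open S" and fin: "\<forall>p\<in>S. \<bar>f p\<bar> \<noteq> \<infinity>"
  shows "continuous_on S f"
proof -
  have "convex_on S (\<lambda>p. real_of_ereal (f p))"
  proof (rule convex_onI)
    show "convex S" using assms(1) unfolding ereal_convex_on_def by blast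
    fix t :: real and x y assume t: "0 < t" "t < 1" and xy: "x \<in> S" "y \<in> S"
    let ?p = "(1 - t) *\<^sub>R x + t *\<^sub>R y"
    have "?p \<in> S" using assms(1) xy t unfolding ereal_convex_on_def convex_alt by simp
    then have "ereal (real_of_ereal (f ?p)) \<le> ereal (1 - t) * ereal (real_of_ereal (f x))
        + ereal t * ereal (real_of_ereal (f y))"
      using assms(1) xy t fin unfolding ereal_convex_on_def by (simp add: ereal_real')
    then show "real_of_ereal (f ?p) \<le> (1 - t) * real_of_ereal (f x) + t * real_of_ereal (f y)"
      by simp
  qed
  then have "continuous_on S (\<lambda>p. ereal (real_of_ereal (f p)))"
    using assms(2) by (intro continuous_on_ereal convex_on_continuous)
  then show ?thesis
    using fin by (simp add: ereal_real' cong: continuous_on_cong)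
qed

section \<open>Lower semicontinuity and a cone minorant\<close>

lemma ereal_lsc_on_UNIV_gt_near:
  fixes \<Phi> :: "'a::metric_space \<Rightarrow> ereal"
  assumes "ereal_lsc_on UNIV \<Phi>" and "L < \<Phi> y"
  shows "\<exists>r>0. \<forall>z. dist z y < r \<longrightarrow> L < \<Phi> z"
proof -
  have "eventually (\<lambda>z. L < \<Phi> z) (nhds y)"
    unfolding eventually_nhds_iff_sequentially
  proof (intro allI impI)
    fix X assume "X \<longlonglongrightarrow> y"
    then have "\<Phi> y \<le> liminf (\<lambda>k. \<Phi> (X k))"
      using assms(1) unfolding ereal_lsc_on_def by blast
    then show "eventually (\<lambda>k. L < \<Phi> (X k)) sequentially"
      using assms(2) unfolding le_Liminf_iff by blast
  qed
  then show ?thesis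
    unfolding eventually_nhds_metric by blast
qed

definition has_cone_minorant :: "('a::metric_space \<Rightarrow> ereal) \<Rightarrow> bool" where
  "has_cone_minorant \<Phi> \<longleftrightarrow> (\<exists>z0 a b. b \<ge> 0 \<and> (\<forall>z. ereal (a - b * dist z z0) \<le> \<Phi> z))"

lemma proper_lsc_convex_has_cone_minorant:
  fixes \<Phi> :: "'a::real_normed_vector \<Rightarrow> ereal"
  assumes proper: "ereal_proper \<Phi>" and lsc: "ereal_lsc_on UNIV \<Phi>"
    and convex: "ereal_convex_on UNIV \<Phi>"
  shows "has_cone_minorant \<Phi>"
proof -
  obtain z0 c where c: "\<Phi> z0 = ereal c"
    using proper unfolding ereal_proper_def by (metis ereal_cases)
  obtain r where r: "r > 0" and near: "\<And>z. dist z z0 < r \<Longrightarrow> ereal (c - 1) < \<Phi> z"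
    using ereal_lsc_on_UNIV_gt_near[OF lsc, of "ereal (c - 1)" z0] c by auto
  have "ereal (c - 1 - (2/r) * dist z z0) \<le> \<Phi> z" for z
  proof (cases "dist z z0 < r")
    case True
    have "ereal (c - 1 - (2/r) * dist z z0) \<le> ereal (c - 1)" using r by simp
    also have "\<dots> \<le> \<Phi> z" using near[OF True] by simp
    finally show ?thesis .
  next
    case False
    txt \<open>The point \<open>w\<close> on the segment from \<open>z0\<close> to \<open>z\<close> at distance \<open>r/2\<close> from \<open>z0\<close> has
      \<open>\<Phi> w > c - 1\<close>; convexity along the segment turns this into a linear bound at \<open>z\<close>.\<close>
    define d where "d = dist z z0"
    define t where "t = r / (2 * d)"
    have d: "d \<ge> r" using False d_def by simp
    have t: "0 < t" "t < 1" using r d unfolding t_def by (auto simp: field_simps)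
    define w where "w = (1 - t) *\<^sub>R z0 + t *\<^sub>R z"
    have "dist w z0 = t * d"
      using t unfolding w_def d_def dist_norm by (simp add: algebra_simps flip: scaleR_diff_right)
    also have "\<dots> = r / 2" using r d unfolding t_def by (simp add: field_simps)
    finally have "ereal (c - 1) < \<Phi> w" using r by (intro near) simp
    also have "\<Phi> w \<le> ereal (1 - t) * \<Phi> z0 + ereal t * \<Phi> z"
      using convex t unfolding ereal_convex_on_def w_def by simp
    finally have lt: "ereal (c - 1) < ereal ((1 - t) * c) + ereal t * \<Phi> z"
      using c by simp
    show ?thesis
    proof (cases "\<Phi> z")
      case (real v)
      then have "t * (v - c) > -1" using lt by (simp add: algebra_simps)
      then have "v - c > -1 / t" using t by (simp add: field_simps)
      moreover have "1 / t = (2/r) * d" using r d unfolding t_def by (simp add: field_simps)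
      ultimately show ?thesis using real d_def by simp
    qed (use proper in \<open>auto simp: ereal_proper_def\<close>)
  qed
  then show ?thesis
    unfolding has_cone_minorant_def using r by (intro exI[of _ z0] exI[of _ "c - 1"] exI[of _ "2/r"]) simp
qed

section \<open>The perspective of the squared norm\<close>

lemma quadratic_absorbs_linear:
  fixes x d b :: real
  assumes "x > 0"
  shows "d\<^sup>2 / (4 * x) - b\<^sup>2 * x \<le> d\<^sup>2 / (2 * x) - b * d"
proof -
  have "d\<^sup>2 / (4 * x) - b\<^sup>2 * x = d\<^sup>2 / (2 * x) - b * d - (d - 2 * b * x)\<^sup>2 / (4 * x)"
    using assms by (simp add: field_simps power2_eq_square)
  moreover have "(d - 2 * b * x)\<^sup>2 / (4 * x) \<ge> 0" using assms by simp
  ultimately show ?thesis by linarith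
qed

text \<open>Also valid when \<open>X\<close> or \<open>Y\<close> vanishes, thanks to the convention \<open>u / 0 = 0\<close>.\<close>
lemma norm_add_square_div_le:
  fixes a b :: "'a::real_inner"
  assumes X: "X \<ge> 0" "X = 0 \<Longrightarrow> a = 0" and Y: "Y \<ge> 0" "Y = 0 \<Longrightarrow> b = 0"
  shows "(norm (a + b))\<^sup>2 / (X + Y) \<le> (norm a)\<^sup>2 / X + (norm b)\<^sup>2 / Y"
proof (cases "X = 0 \<or> Y = 0")
  case True
  then show ?thesis using X Y by auto
next
  case False
  then have X: "X > 0" and Y: "Y > 0" using X Y by auto
  have "0 \<le> (norm (Y *\<^sub>R a - X *\<^sub>R b))\<^sup>2" by simp
  also have "\<dots> = Y\<^sup>2 * (norm a)\<^sup>2 - 2 * X * Y * (a \<bullet> b) + X\<^sup>2 * (norm b)\<^sup>2"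
    unfolding power2_norm_eq_inner
    by (simp add: inner_diff_left inner_diff_right inner_commute power2_eq_square algebra_simps)
  finally have "2 * X * Y * (a \<bullet> b) \<le> Y\<^sup>2 * (norm a)\<^sup>2 + X\<^sup>2 * (norm b)\<^sup>2" by simp
  moreover have "(norm (a + b))\<^sup>2 = (norm a)\<^sup>2 + 2 * (a \<bullet> b) + (norm b)\<^sup>2"
    unfolding power2_norm_eq_inner by (simp add: inner_add_left inner_add_right inner_commute)
  ultimately have "X * Y * (norm (a + b))\<^sup>2 \<le> (X + Y) * (Y * (norm a)\<^sup>2 + X * (norm b)\<^sup>2)"
    by (simp add: algebra_simps power2_eq_square)
  then show ?thesis using X Y by (simp add: field_simps)
qed

text \<open>The perspective \<open>x q(w/x)\<close> of \<open>q = \<parallel>\<cdot>\<parallel>\<^sup>2/2\<close>, closed at \<open>x = 0\<close>.\<close>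
definition sq_norm_persp :: "real \<Rightarrow> 'a::real_normed_vector \<Rightarrow> ereal" where
  "sq_norm_persp x w =
     (if x = 0 then (if w = 0 then 0 else \<infinity>) else ereal ((norm w)\<^sup>2 / (2 * x)))"

lemma sq_norm_persp_pos: "x > 0 \<Longrightarrow> sq_norm_persp x w = ereal ((norm w)\<^sup>2 / (2 * x))"
  unfolding sq_norm_persp_def by simp

lemma sq_norm_persp_nonneg: "x \<ge> 0 \<Longrightarrow> 0 \<le> sq_norm_persp x w"
  unfolding sq_norm_persp_def by auto

lemma sq_norm_persp_zero [simp]: "sq_norm_persp x 0 = 0"
  unfolding sq_norm_persp_def by simp

lemma sq_norm_persp_finite:
  assumes "x \<ge> 0" and "sq_norm_persp x w \<noteq> \<infinity>"
  shows "x = 0 \<Longrightarrow> w = 0" and "sq_norm_persp x w = ereal ((norm w)\<^sup>2 / (2 * x))"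
  using assms unfolding sq_norm_persp_def by (auto split: if_splits)

lemma sq_norm_persp_convex:
  "ereal_convex_on ({0..} \<times> UNIV) (\<lambda>(x, w). sq_norm_persp x (w :: 'a::real_inner))"
  unfolding ereal_convex_on_def
proof (intro conjI ballI allI impI)
  show "convex ({0::real..} \<times> (UNIV :: 'a set))" by (intro convex_Times) auto
  fix p1 p2 :: "real \<times> 'a" assume p: "p1 \<in> {0..} \<times> UNIV" "p2 \<in> {0..} \<times> UNIV"
  obtain x1 w1 x2 w2 where p12: "p1 = (x1, w1)" "p2 = (x2, w2)" by fastforce
  have x: "x1 \<ge> 0" "x2 \<ge> 0" using p p12 by auto
  then show "(case p1 of (x, w) \<Rightarrow> sq_norm_persp x w) \<noteq> -\<infinity>"
    using p12 sq_norm_persp_nonneg[of x1 w1] by auto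
  fix t :: real assume "0 < t \<and> t < 1"
  then have t: "0 < t" "0 < 1 - t" by auto
  let ?x = "(1 - t) * x1 + t * x2" and ?w = "(1 - t) *\<^sub>R w1 + t *\<^sub>R w2"
  have scaled: "(norm (c *\<^sub>R w))\<^sup>2 / (c * x) = c * ((norm w)\<^sup>2 / x)" if "c > 0" for c x and w :: 'a
    using that by (cases "x = 0") (simp_all add: power_mult_distrib field_simps power2_eq_square)
  show "(case (1 - t) *\<^sub>R p1 + t *\<^sub>R p2 of (x, w) \<Rightarrow> sq_norm_persp x w)
      \<le> ereal (1 - t) * (case p1 of (x, w) \<Rightarrow> sq_norm_persp x w)
        + ereal t * (case p2 of (x, w) \<Rightarrow> sq_norm_persp x w)"
  proof (cases "sq_norm_persp x1 w1 = \<infinity> \<or> sq_norm_persp x2 w2 = \<infinity>")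
    case True
    then show ?thesis
      using t p12 x sq_norm_persp_nonneg[of x1 w1] sq_norm_persp_nonneg[of x2 w2] by auto
  next
    case False
    note fin1 = sq_norm_persp_finite[of x1 w1, OF x(1)]
      and fin2 = sq_norm_persp_finite[of x2 w2, OF x(2)]
    have "?x = 0 \<Longrightarrow> ?w = 0" using t x fin1 fin2 False by (auto simp: add_nonneg_eq_0_iff)
    then have "sq_norm_persp ?x ?w = ereal ((norm ?w)\<^sup>2 / (2 * ?x))"
      using t x unfolding sq_norm_persp_def by auto
    also have "(norm ?w)\<^sup>2 / (2 * ?x) = ((norm ?w)\<^sup>2 / ?x) / 2" by simp
    also have "\<dots> \<le>
        ((norm ((1 - t) *\<^sub>R w1))\<^sup>2 / ((1 - t) * x1) + (norm (t *\<^sub>R w2))\<^sup>2 / (t * x2)) / 2"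
      using t x fin1(1) fin2(1) False
      by (intro divide_right_mono norm_add_square_div_le) auto
    also have "\<dots> = (1 - t) * ((norm w1)\<^sup>2 / (2 * x1)) + t * ((norm w2)\<^sup>2 / (2 * x2))"
      unfolding scaled[OF t(1)] scaled[OF t(2)] by (simp add: add_divide_distrib)
    finally show ?thesis using p12 False fin1(2) fin2(2) by simp
  qed
qed

section \<open>The Moreau envelope\<close>

definition moreau_env :: "('a::real_normed_vector \<Rightarrow> ereal) \<Rightarrow> real \<Rightarrow> 'a \<Rightarrow> ereal" where
  "moreau_env \<Phi> x y = (INF z. \<Phi> z + sq_norm_persp x (y - z))"

lemma moreau_env_le: "moreau_env \<Phi> x y \<le> \<Phi> z + sq_norm_persp x (y - z)"
  unfolding moreau_env_def by (rule INF_lower) simp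

lemma moreau_env_zero:
  assumes "\<And>z. \<Phi> z \<noteq> -\<infinity>"
  shows "moreau_env \<Phi> 0 y = \<Phi> y"
proof (rule antisym)
  show "moreau_env \<Phi> 0 y \<le> \<Phi> y" using moreau_env_le[of \<Phi> 0 y y] by simp
  show "\<Phi> y \<le> moreau_env \<Phi> 0 y"
    unfolding moreau_env_def
    by (rule INF_greatest) (use assms in \<open>auto simp: sq_norm_persp_def\<close>)
qed

lemma moreau_env_antimono:
  assumes "0 < x1" and "x1 \<le> x2"
  shows "moreau_env \<Phi> x2 y \<le> moreau_env \<Phi> x1 y"
  unfolding moreau_env_def
proof (rule INF_mono')
  fix z
  have "(norm (y - z))\<^sup>2 / (2 * x2) \<le> (norm (y - z))\<^sup>2 / (2 * x1)"
    using assms by (intro divide_left_mono) auto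
  then show "\<Phi> z + sq_norm_persp x2 (y - z) \<le> \<Phi> z + sq_norm_persp x1 (y - z)"
    using assms by (simp add: sq_norm_persp_pos add_left_mono)
qed

lemma cone_plus_sq_norm_persp_ge:
  fixes \<Phi> :: "'a::real_normed_vector \<Rightarrow> ereal"
  assumes b: "b \<ge> 0" and cone: "\<And>z. ereal (a - b * dist z z0) \<le> \<Phi> z" and x: "x > 0"
  shows "ereal (a - b * dist y z0 - b\<^sup>2 * x + (dist z y)\<^sup>2 / (4 * x)) \<le> \<Phi> z + sq_norm_persp x (y - z)"
proof -
  define d where "d = dist z y"
  have "b * dist z z0 \<le> b * (d + dist y z0)"
    using b dist_triangle[of z z0 y] unfolding d_def by (rule mult_left_mono[rotated])
  then have real: "a - b * dist y z0 - b\<^sup>2 * x + d\<^sup>2 / (4 * x) \<le> a - b * dist z z0 + d\<^sup>2 / (2 * x)"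
    using quadratic_absorbs_linear[OF x, of d b] by (simp add: algebra_simps)
  have "sq_norm_persp x (y - z) = ereal (d\<^sup>2 / (2 * x))"
    using x unfolding d_def by (simp add: sq_norm_persp_pos dist_norm norm_minus_commute)
  then have "ereal (a - b * dist z z0 + d\<^sup>2 / (2 * x)) \<le> \<Phi> z + sq_norm_persp x (y - z)"
    using add_right_mono[OF cone[of z], of "ereal (d\<^sup>2 / (2 * x))"] by simp
  with real show ?thesis unfolding d_def using order_trans ereal_less_eq(3) by blast
qed

lemma moreau_env_ge_cone:
  fixes \<Phi> :: "'a::real_normed_vector \<Rightarrow> ereal"
  assumes "b \<ge> 0" and "\<And>z. ereal (a - b * dist z z0) \<le> \<Phi> z" and "x > 0"
  shows "ereal (a - b * dist y z0 - b\<^sup>2 * x) \<le> moreau_env \<Phi> x y"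
  unfolding moreau_env_def
proof (rule INF_greatest)
  fix z
  have "ereal (a - b * dist y z0 - b\<^sup>2 * x)
      \<le> ereal (a - b * dist y z0 - b\<^sup>2 * x + (dist z y)\<^sup>2 / (4 * x))"
    using assms(3) by simp
  also have "\<dots> \<le> \<Phi> z + sq_norm_persp x (y - z)" by (rule cone_plus_sq_norm_persp_ge[OF assms])
  finally show "ereal (a - b * dist y z0 - b\<^sup>2 * x) \<le> \<Phi> z + sq_norm_persp x (y - z)" .
qed

lemma moreau_env_finite:
  fixes \<Phi> :: "'a::real_normed_vector \<Rightarrow> ereal"
  assumes "ereal_proper \<Phi>" and "has_cone_minorant \<Phi>" and x: "x > 0"
  shows "\<bar>moreau_env \<Phi> x y\<bar> \<noteq> \<infinity>"
proof -
  obtain z1 where z1: "\<Phi> z1 \<noteq> \<infinity>" using assms(1) unfolding ereal_proper_def by blast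
  obtain z0 a b where "b \<ge> 0" and "\<And>z. ereal (a - b * dist z z0) \<le> \<Phi> z"
    using assms(2) unfolding has_cone_minorant_def by blast
  then have "moreau_env \<Phi> x y \<noteq> -\<infinity>"
    using moreau_env_ge_cone[OF _ _ x, of b a z0 \<Phi> y] by auto
  moreover have "moreau_env \<Phi> x y \<noteq> \<infinity>"
    using moreau_env_le[of \<Phi> x y z1] z1 x by (auto simp: sq_norm_persp_pos)
  ultimately show ?thesis by auto
qed

lemma moreau_env_convex:
  fixes \<Phi> :: "'a::real_inner \<Rightarrow> ereal"
  assumes "ereal_proper \<Phi>" and "has_cone_minorant \<Phi>" and convex: "ereal_convex_on UNIV \<Phi>"
  shows "ereal_convex_on ({0..} \<times> UNIV) (\<lambda>p. moreau_env \<Phi> (fst p) (snd p))"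
proof -
  let ?T = "{0::real..} \<times> (UNIV :: 'a set)"
  have "ereal_convex_on (?T \<times> UNIV) (\<lambda>q. \<Phi> (snd q))"
    using convex by (rule ereal_convex_on_linear_comp) (auto intro: linear_snd convex_Times)
  moreover have "ereal_convex_on (?T \<times> UNIV)
      (\<lambda>q. (\<lambda>(x, w). sq_norm_persp x w) (fst (fst q), snd (fst q) - snd q))"
    using sq_norm_persp_convex
    by (rule ereal_convex_on_linear_comp) (auto intro!: linearI convex_Times simp: algebra_simps)
  ultimately have conv: "ereal_convex_on (?T \<times> UNIV)
      (\<lambda>q. \<Phi> (snd q) + sq_norm_persp (fst (fst q)) (snd (fst q) - snd q))"
    by (simp add: ereal_convex_on_add)
  have bdd: "\<forall>p\<in>?T. moreau_env \<Phi> (fst p) (snd p) \<noteq> -\<infinity>"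
  proof
    fix p :: "real \<times> 'a" assume "p \<in> ?T"
    then consider "fst p = 0" | "fst p > 0" by force
    then show "moreau_env \<Phi> (fst p) (snd p) \<noteq> -\<infinity>"
      using assms(1,2) moreau_env_finite[of \<Phi> "fst p" "snd p"] moreau_env_zero[of \<Phi> "snd p"]
      by cases (auto simp: ereal_proper_def)
  qed
  show ?thesis
    using ereal_convex_on_partial_INF[OF conv] bdd by (simp add: moreau_env_def)
qed

text \<open>For small \<open>x\<close> only points \<open>z\<close> near \<open>y\<close> matter: far away the penalty \<open>\<parallel>y' - z\<parallel>\<^sup>2/(4x)\<close>
  beats the cone minorant.\<close>
lemma moreau_env_ge_near_zero:
  fixes \<Phi> :: "'a::real_normed_vector \<Rightarrow> ereal"
  assumes "has_cone_minorant \<Phi>" and r: "r > 0" and near: "\<And>z. dist z y < r \<Longrightarrow> ereal v \<le> \<Phi> z"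
  shows "\<exists>\<delta>>0. \<forall>x y'. 0 < x \<and> x < \<delta> \<and> dist y' y < \<delta> \<longrightarrow> ereal v \<le> moreau_env \<Phi> x y'"
proof -
  obtain z0 a b where b: "b \<ge> 0" and cone: "\<And>z. ereal (a - b * dist z z0) \<le> \<Phi> z"
    using assms(1) unfolding has_cone_minorant_def by blast
  define M where "M = max 1 (v - a + b * (dist y z0 + r / 2) + b\<^sup>2)"
  define \<delta> where "\<delta> = min (r / 2) (min 1 (r\<^sup>2 / (16 * M)))"
  have M: "M > 0" unfolding M_def by simp
  have "ereal v \<le> moreau_env \<Phi> x y'" if x: "0 < x" "x < \<delta>" and y': "dist y' y < \<delta>" for x y'
    unfolding moreau_env_def
  proof (rule INF_greatest)
    fix z
    show "ereal v \<le> \<Phi> z + sq_norm_persp x (y' - z)"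
    proof (cases "dist z y < r")
      case True
      then show ?thesis
        using near[of z] sq_norm_persp_nonneg[of x "y' - z"] x by (simp add: add_increasing2)
    next
      case False
      have y'r: "dist y' y < r / 2" and x1: "x < 1" and xM: "x * (16 * M) < r\<^sup>2"
        using x y' M unfolding \<delta>_def by (auto simp: pos_less_divide_eq)
      have "r / 2 \<le> dist z y'" using False y'r dist_triangle[of z y y'] by linarith
      then have "(r / 2)\<^sup>2 / (4 * x) \<le> (dist z y')\<^sup>2 / (4 * x)"
        using r x by (intro divide_right_mono power_mono) auto
      moreover have "M < (r / 2)\<^sup>2 / (4 * x)"
        using xM x by (simp add: field_simps power2_eq_square)
      moreover have "b * dist y' z0 \<le> b * (r / 2 + dist y z0)"
        using b y'r dist_triangle[of y' z0 y] by (intro mult_left_mono) auto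
      moreover have "b\<^sup>2 * x \<le> b\<^sup>2" using x1 x by (simp add: mult_left_le)
      ultimately have "v \<le> a - b * dist y' z0 - b\<^sup>2 * x + (dist z y')\<^sup>2 / (4 * x)"
        unfolding M_def by (simp add: algebra_simps)
      then have "ereal v \<le> ereal (a - b * dist y' z0 - b\<^sup>2 * x + (dist z y')\<^sup>2 / (4 * x))"
        by simp
      also have "\<dots> \<le> \<Phi> z + sq_norm_persp x (y' - z)"
        by (rule cone_plus_sq_norm_persp_ge[OF b cone x(1)])
      finally show ?thesis .
    qed
  qed
  moreover have "\<delta> > 0" unfolding \<delta>_def using r M by simp
  ultimately show ?thesis by blast
qed

definition moreau_ext :: "('a::real_normed_vector \<Rightarrow> ereal) \<Rightarrow> real \<times> 'a \<Rightarrow> ereal" where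
  "moreau_ext \<Phi> p = moreau_env \<Phi> (fst p) (snd p) - ereal (fst p)"

lemma moreau_ext_zero: "(\<And>z. \<Phi> z \<noteq> -\<infinity>) \<Longrightarrow> moreau_ext \<Phi> (0, y) = \<Phi> y"
  unfolding moreau_ext_def by (simp add: moreau_env_zero zero_ereal_def[symmetric])

lemma moreau_ext_finite:
  "ereal_proper \<Phi> \<Longrightarrow> has_cone_minorant \<Phi> \<Longrightarrow> x > 0 \<Longrightarrow> \<bar>moreau_ext \<Phi> (x, y)\<bar> \<noteq> \<infinity>"
  unfolding moreau_ext_def using moreau_env_finite[of \<Phi> x y] by auto

lemma moreau_ext_le: "x \<ge> 0 \<Longrightarrow> moreau_ext \<Phi> (x, y) \<le> \<Phi> y"
  unfolding moreau_ext_def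
  using moreau_env_le[of \<Phi> x y y] ereal_diff_le_self[of "ereal x" "moreau_env \<Phi> x y"]
  by simp

lemma moreau_ext_strict_antimono:
  assumes "ereal_proper \<Phi>" and "has_cone_minorant \<Phi>" and "0 < x1" and "x1 < x2"
  shows "moreau_ext \<Phi> (x2, y) < moreau_ext \<Phi> (x1, y)"
proof -
  have "\<bar>moreau_env \<Phi> x1 y\<bar> \<noteq> \<infinity>" and "\<bar>moreau_env \<Phi> x2 y\<bar> \<noteq> \<infinity>"
    using assms by (intro moreau_env_finite; simp)+
  moreover have "moreau_env \<Phi> x2 y \<le> moreau_env \<Phi> x1 y"
    using assms by (intro moreau_env_antimono) auto
  ultimately show ?thesis
    unfolding moreau_ext_def using assms(4)
    by (cases "moreau_env \<Phi> x1 y"; cases "moreau_env \<Phi> x2 y") auto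
qed

lemma moreau_ext_convex:
  fixes \<Phi> :: "'a::real_inner \<Rightarrow> ereal"
  assumes "ereal_proper \<Phi>" and "has_cone_minorant \<Phi>" and "ereal_convex_on UNIV \<Phi>"
  shows "ereal_convex_on ({0..} \<times> UNIV) (moreau_ext \<Phi>)"
proof -
  have "ereal_convex_on ({0..} \<times> UNIV) (\<lambda>p. moreau_env \<Phi> (fst p) (snd p) + ereal (- fst p))"
    by (intro ereal_convex_on_add moreau_env_convex[OF assms] ereal_convex_on_ereal
        convex_onI convex_Times) (simp_all add: algebra_simps)
  then show ?thesis unfolding moreau_ext_def by (simp add: minus_ereal_def)
qed

lemma moreau_ext_gt_near_zero:
  fixes \<Phi> :: "'a::real_normed_vector \<Rightarrow> ereal"
  assumes lsc: "ereal_lsc_on UNIV \<Phi>" and proper: "ereal_proper \<Phi>" and "has_cone_minorant \<Phi>"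
    and "L < \<Phi> y"
  shows "\<exists>\<delta>>0. \<forall>x y'. 0 \<le> x \<and> x < \<delta> \<and> dist y' y < \<delta> \<longrightarrow> L < moreau_ext \<Phi> (x, y')"
proof -
  obtain u where u: "L < ereal u" "ereal u < \<Phi> y" using ereal_dense2[OF assms(4)] by blast
  obtain v where v: "u < v" "ereal v < \<Phi> y" using ereal_dense2[OF u(2)] by auto
  obtain r where r: "r > 0" and near: "\<And>z. dist z y < r \<Longrightarrow> ereal v < \<Phi> z"
    using ereal_lsc_on_UNIV_gt_near[OF lsc v(2)] by blast
  then have near_le: "\<And>z. dist z y < r \<Longrightarrow> ereal v \<le> \<Phi> z" by (simp add: less_imp_le)
  obtain \<delta> where \<delta>: "\<delta> > 0"
    and env: "\<And>x y'. 0 < x \<Longrightarrow> x < \<delta> \<Longrightarrow> dist y' y < \<delta> \<Longrightarrow> ereal v \<le> moreau_env \<Phi> x y'"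
    using moreau_env_ge_near_zero[OF assms(3) r near_le] by blast
  define \<delta>' where "\<delta>' = min \<delta> (min r (v - u))"
  have "L < moreau_ext \<Phi> (x, y')" if x: "0 \<le> x" "x < \<delta>'" and y': "dist y' y < \<delta>'" for x y'
  proof (cases "x = 0")
    case True
    have "L < ereal u" by fact
    also have "ereal u < ereal v" using v(1) by simp
    also have "ereal v < \<Phi> y'" using near y' unfolding \<delta>'_def by simp
    also have "\<Phi> y' = moreau_ext \<Phi> (x, y')"
      using True proper unfolding ereal_proper_def by (simp add: moreau_ext_zero)
    finally show ?thesis .
  next
    case False
    have "ereal v \<le> moreau_env \<Phi> x y'" using env[of x y'] False x y' unfolding \<delta>'_def by simp
    then have env_x: "ereal (v - x) \<le> moreau_env \<Phi> x y' - ereal x"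
      by (cases "moreau_env \<Phi> x y'") simp_all
    have "L < ereal u" by fact
    also have "ereal u < ereal (v - x)" using x unfolding \<delta>'_def by simp
    also note env_x
    finally show ?thesis unfolding moreau_ext_def by simp
  qed
  moreover have "\<delta>' > 0" unfolding \<delta>'_def using \<delta> r v(1) by simp
  ultimately show ?thesis by (intro exI[of _ \<delta>']) simp
qed

lemma moreau_ext_lsc:
  fixes \<Phi> :: "'a::euclidean_space \<Rightarrow> ereal"
  assumes lsc: "ereal_lsc_on UNIV \<Phi>" and proper: "ereal_proper \<Phi>"
    and convex: "ereal_convex_on UNIV \<Phi>"
  shows "ereal_lsc_on ({0..} \<times> UNIV) (moreau_ext \<Phi>)"
  unfolding ereal_lsc_on_def
proof (intro ballI allI impI)
  have minorant: "has_cone_minorant \<Phi>"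
    using proper lsc convex by (rule proper_lsc_convex_has_cone_minorant)
  fix p :: "real \<times> 'a" and X assume "p \<in> {0..} \<times> UNIV" and "(\<forall>k. X k \<in> {0..} \<times> UNIV) \<and> X \<longlonglongrightarrow> p"
  then have p: "fst p \<ge> 0" and X: "\<And>k. fst (X k) \<ge> 0" and lim: "X \<longlonglongrightarrow> p"
    by (auto simp: mem_Times_iff)
  show "moreau_ext \<Phi> p \<le> liminf (\<lambda>k. moreau_ext \<Phi> (X k))"
  proof (cases "fst p = 0")
    case True
    then have p0: "moreau_ext \<Phi> p = \<Phi> (snd p)"
      using proper moreau_ext_zero[of \<Phi> "snd p"] unfolding ereal_proper_def by (metis prod.collapse)
    show ?thesis
      unfolding p0 le_Liminf_iff
    proof (intro allI impI)
      fix c assume "c < \<Phi> (snd p)"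
      then obtain \<delta> where \<delta>: "\<delta> > 0"
        and near: "\<forall>x y'. 0 \<le> x \<and> x < \<delta> \<and> dist y' (snd p) < \<delta> \<longrightarrow> c < moreau_ext \<Phi> (x, y')"
        using moreau_ext_gt_near_zero[OF lsc proper minorant] by blast
      have "eventually (\<lambda>k. dist (X k) p < \<delta>) sequentially"
        using lim \<delta> by (rule tendstoD)
      then show "eventually (\<lambda>k. c < moreau_ext \<Phi> (X k)) sequentially"
      proof (rule eventually_mono)
        fix k assume "dist (X k) p < \<delta>"
        then have "dist (fst (X k)) (fst p) < \<delta>" and "dist (snd (X k)) (snd p) < \<delta>"
          using dist_fst_le[of "X k" p] dist_snd_le[of "X k" p] by linarith+
        then show "c < moreau_ext \<Phi> (X k)"
          using near X[of k] True by (metis dist_real_def abs_of_nonneg diff_zero prod.collapse)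
      qed
    qed
  next
    case False
    let ?S = "{0::real<..} \<times> (UNIV :: 'a set)"
    have S: "open ?S" "convex ?S" "p \<in> ?S"
      using p False by (auto intro!: open_Times convex_Times simp: mem_Times_iff)
    have conv: "ereal_convex_on ?S (moreau_ext \<Phi>)"
      by (rule ereal_convex_on_subset[OF moreau_ext_convex[OF proper minorant convex] _ S(2)]) auto
    have "\<forall>q\<in>?S. \<bar>moreau_ext \<Phi> q\<bar> \<noteq> \<infinity>"
      using moreau_ext_finite[OF proper minorant] by auto
    then have "continuous_on ?S (moreau_ext \<Phi>)"
      by (rule ereal_convex_on_continuous_on[OF conv S(1)])
    then have "(\<lambda>k. moreau_ext \<Phi> (X k)) \<longlonglongrightarrow> moreau_ext \<Phi> p"
      using S lim by (metis continuous_on_eq_continuous_at isCont_tendsto_compose)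
    then show ?thesis by (simp add: lim_imp_Liminf)
  qed
qed

lemma moreau_ext_tendsto_at_right_zero:
  fixes \<Phi> :: "'a::real_normed_vector \<Rightarrow> ereal"
  assumes lsc: "ereal_lsc_on UNIV \<Phi>" and proper: "ereal_proper \<Phi>" and "has_cone_minorant \<Phi>"
  shows "((\<lambda>x. moreau_ext \<Phi> (x, y)) \<longlongrightarrow> \<Phi> y) (at_right 0)"
proof (rule order_tendstoI)
  fix c assume "c < \<Phi> y"
  then obtain \<delta> where "\<delta> > 0"
    and "\<forall>x y'. 0 \<le> x \<and> x < \<delta> \<and> dist y' y < \<delta> \<longrightarrow> c < moreau_ext \<Phi> (x, y')"
    using moreau_ext_gt_near_zero[OF assms] by blast
  then show "eventually (\<lambda>x. c < moreau_ext \<Phi> (x, y)) (at_right 0)"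
    unfolding eventually_at_right_field by (intro exI[of _ \<delta>]) auto
next
  fix c assume "\<Phi> y < c"
  then have "moreau_ext \<Phi> (x, y) < c" if "x > 0" for x
    using that by (intro le_less_trans[OF moreau_ext_le]) simp_all
  then show "eventually (\<lambda>x. moreau_ext \<Phi> (x, y) < c) (at_right 0)"
    unfolding eventually_at_right_field by (intro exI[of _ 1]) simp
qed

theorem proposition1:
  fixes \<Phi> :: "real ^ 'n \<Rightarrow> ereal"
  assumes "ereal_proper \<Phi>"
    and "ereal_lsc_on UNIV \<Phi>"
    and "ereal_convex_on UNIV \<Phi>"
  shows "\<exists>\<phi> :: (real \<times> (real ^ 'n)) \<Rightarrow> ereal.
           ereal_lsc_on ({0::real..} \<times> (UNIV :: (real ^ 'n) set)) \<phi> \<and>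
           ereal_convex_on ({0::real..} \<times> (UNIV :: (real ^ 'n) set)) \<phi> \<and>
           (\<forall>y. \<phi> (0, y) = \<Phi> y) \<and>
           (\<forall>x y. x > 0 \<longrightarrow> \<phi> (x, y) \<noteq> \<infinity> \<and> \<phi> (x, y) \<noteq> -\<infinity>) \<and>
           (\<forall>y x1 x2. 0 < x1 \<and> x1 < x2 \<longrightarrow> \<phi> (x2, y) < \<phi> (x1, y)) \<and>
           (\<forall>y. ((\<lambda>x. \<phi> (x, y)) \<longlongrightarrow> \<Phi> y) (at_right 0))"
proof (intro exI[of _ "moreau_ext \<Phi>"] conjI allI impI)
  note proper = assms(1) and lsc = assms(2) and convex = assms(3)
  have minorant: "has_cone_minorant \<Phi>"
    using proper lsc convex by (rule proper_lsc_convex_has_cone_minorant)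
  show "ereal_lsc_on ({0..} \<times> UNIV) (moreau_ext \<Phi>)"
    using lsc proper convex by (rule moreau_ext_lsc)
  show "ereal_convex_on ({0..} \<times> UNIV) (moreau_ext \<Phi>)"
    using proper minorant convex by (rule moreau_ext_convex)
  show "moreau_ext \<Phi> (0, y) = \<Phi> y" for y
    using proper unfolding ereal_proper_def by (simp add: moreau_ext_zero)
  show "moreau_ext \<Phi> (x, y) \<noteq> \<infinity>" "moreau_ext \<Phi> (x, y) \<noteq> -\<infinity>" if "x > 0" for x y
    using moreau_ext_finite[OF proper minorant that, of y] by auto
  show "moreau_ext \<Phi> (x2, y) < moreau_ext \<Phi> (x1, y)" if "0 < x1 \<and> x1 < x2" for y x1 x2
    using proper minorant that by (auto intro: moreau_ext_strict_antimono)
  show "((\<lambda>x. moreau_ext \<Phi> (x, y)) \<longlongrightarrow> \<Phi> y) (at_right 0)" for y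
    using lsc proper minorant by (rule moreau_ext_tendsto_at_right_zero)
qed

end
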